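(* Let $\Omega\subset\mathbb{R}^d$ be a bounded domain and $k\ge1$. Suppose $f:\mathbb{R}^d\to\mathbb{R}$ can be represented by an MLP with width $W\ge1$, depth $L\ge1$ and activation function $\sigma_k(x)=\max(0,x)^k$. Then there exists a KAN $g$ with width $W$, depth at most $2L$, and grid size $G=2$ with $k$-th order B-spline functions such that $g(\mathbf{x})=f(\mathbf{x})$ for all $\mathbf{x}\in\Omega$.
   Context: An MLP of depth $L$ and width $W$ with activation $\sigma_k$ is a map $f=A_L\circ\sigma_k\circ A_{L-1}\circ\cdots\circ\sigma_k\circ A_1$, where the $A_l$ are affine maps, all intermediate (hidden) dimensions are at most $W$, and $\sigma_k$ is applied coordinatewise. A KAN of depth $D$ is a composition $\Phi_{D-1}\circ\cdots\circ\Phi_0$ of KAN layers, where a KAN layer from $\mathbb{R}^{m}$ to $\mathbb{R}^{m'}$ is a matrix of univariate functions $\{\phi_{j,i}\}$ acting by $(\Phi\mathbf{x})_j=\sum_{i=1}^{m}\phi_{j,i}(x_i)$; its width is the maximal hidden-layer dimension. Each univariate function has the form $\phi(x)=w_b\,\mathrm{silu}(x)+w_s\sum_i c_iB_i(x)$ with $\mathrm{silu}(x)=x/(1+e^{-x})$, real coefficients $w_b,w_s,c_i$, and $B_i$ the degree-$k$ B-splines on the knot sequence obtained from a uniform partition of an interval $[-R,R]$ into $G$ intervals extended uniformly by $k$ knots on each side ("grid size $G$ with $k$-th order B-splines"). *)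

theory Defs
  imports "HOL-Analysis.Analysis"
begin

definition sigma_pow :: "nat \<Rightarrow> real \<Rightarrow> real" where
  "sigma_pow k x = (max 0 x) ^ k"

definition silu :: "real \<Rightarrow> real" where
  "silu x = x / (1 + exp (- x))"

text \<open>B-splines by the Cox--de Boor recursion: bspline t p i is the degree p
  B-spline on the knots t i, ..., t (i+p+1).\<close>
fun bspline :: "(nat \<Rightarrow> real) \<Rightarrow> nat \<Rightarrow> nat \<Rightarrow> real \<Rightarrow> real" where
  "bspline t 0 i x = (if t i \<le> x \<and> x < t (Suc i) then 1 else 0)"
| "bspline t (Suc p) i x =
     (x - t i) / (t (i + Suc p) - t i) * bspline t p i x
   + (t (i + p + 2) - x) / (t (i + p + 2) - t (Suc i)) * bspline t p (Suc i) x"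

text \<open>Uniform partition of [-R,R] into G intervals, extended uniformly by k knots
  on each side; knot j (j = 0..G+2k) is -R + (j-k)*2R/G.\<close>
definition uniform_knots :: "real \<Rightarrow> nat \<Rightarrow> nat \<Rightarrow> nat \<Rightarrow> real" where
  "uniform_knots R G k j = - R + (real j - real k) * (2 * R / real G)"

definition kan_basis_fun :: "nat \<Rightarrow> nat \<Rightarrow> real \<Rightarrow> (real \<Rightarrow> real) \<Rightarrow> bool" where
  "kan_basis_fun k G R \<phi> \<longleftrightarrow>
     (\<exists>wb ws (c :: nat \<Rightarrow> real). \<forall>x. \<phi> x =
        wb * silu x + ws * (\<Sum>i<G + k. c i * bspline (uniform_knots R G k) k i x))"

text \<open>MLPs. Hidden vectors are nat-indexed, only the first m coordinates being used
  by a layer of input dimension m. The first affine map acts on R^d = real^'d.\<close>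
definition aff_in :: "(nat \<Rightarrow> 'd::finite \<Rightarrow> real) \<Rightarrow> (nat \<Rightarrow> real) \<Rightarrow> real^'d \<Rightarrow> nat \<Rightarrow> real" where
  "aff_in M b x = (\<lambda>j. (\<Sum>i\<in>UNIV. M j i * x $ i) + b j)"

definition aff :: "(nat \<Rightarrow> nat \<Rightarrow> real) \<Rightarrow> (nat \<Rightarrow> real) \<Rightarrow> nat \<Rightarrow> (nat \<Rightarrow> real) \<Rightarrow> nat \<Rightarrow> real" where
  "aff M b m h = (\<lambda>j. (\<Sum>i<m. M j i * h i) + b j)"

fun mlp_tail :: "nat \<Rightarrow> ((nat \<Rightarrow> nat \<Rightarrow> real) \<times> (nat \<Rightarrow> real)) list \<Rightarrow> nat list
                  \<Rightarrow> (nat \<Rightarrow> real) \<Rightarrow> (nat \<Rightarrow> real)" where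
  "mlp_tail k ((M, b) # As) (m # ms) h = mlp_tail k As ms (aff M b m (\<lambda>i. sigma_pow k (h i)))"
| "mlp_tail k _ _ h = h"

definition mlp_eval :: "nat \<Rightarrow> (nat \<Rightarrow> 'd::finite \<Rightarrow> real) \<Rightarrow> (nat \<Rightarrow> real)
    \<Rightarrow> ((nat \<Rightarrow> nat \<Rightarrow> real) \<times> (nat \<Rightarrow> real)) list \<Rightarrow> nat list \<Rightarrow> real^'d \<Rightarrow> real" where
  "mlp_eval k M0 b0 As hs x = mlp_tail k As hs (aff_in M0 b0 x) 0"

text \<open>f is represented by an MLP of depth L (L affine maps A_1..A_L), hidden
  dimensions hs (L-1 of them) all at most W, scalar output (coordinate 0).\<close>
definition is_mlp :: "nat \<Rightarrow> nat \<Rightarrow> nat \<Rightarrow> (real^'d::finite \<Rightarrow> real) \<Rightarrow> bool" where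
  "is_mlp k W L f \<longleftrightarrow> 1 \<le> L \<and>
     (\<exists>(M0 :: nat \<Rightarrow> 'd \<Rightarrow> real) b0 As hs.
        length As = L - 1 \<and> length hs = L - 1 \<and> (\<forall>m\<in>set hs. m \<le> W) \<and>
        (\<forall>x. f x = mlp_eval k M0 b0 As hs x))"

definition kan_in :: "(nat \<Rightarrow> 'd::finite \<Rightarrow> real \<Rightarrow> real) \<Rightarrow> real^'d \<Rightarrow> nat \<Rightarrow> real" where
  "kan_in \<Phi> x = (\<lambda>j. \<Sum>i\<in>UNIV. \<Phi> j i (x $ i))"

definition kan_layer :: "(nat \<Rightarrow> nat \<Rightarrow> real \<Rightarrow> real) \<Rightarrow> nat \<Rightarrow> (nat \<Rightarrow> real) \<Rightarrow> nat \<Rightarrow> real" where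
  "kan_layer \<Phi> m h = (\<lambda>j. \<Sum>i<m. \<Phi> j i (h i))"

fun kan_tail :: "(nat \<Rightarrow> nat \<Rightarrow> real \<Rightarrow> real) list \<Rightarrow> nat list \<Rightarrow> (nat \<Rightarrow> real) \<Rightarrow> (nat \<Rightarrow> real)" where
  "kan_tail (\<Phi> # \<Phi>s) (m # ms) h = kan_tail \<Phi>s ms (kan_layer \<Phi> m h)"
| "kan_tail _ _ h = h"

definition kan_eval :: "(nat \<Rightarrow> 'd::finite \<Rightarrow> real \<Rightarrow> real) \<Rightarrow> (nat \<Rightarrow> nat \<Rightarrow> real \<Rightarrow> real) list
    \<Rightarrow> nat list \<Rightarrow> real^'d \<Rightarrow> real" where
  "kan_eval \<Phi>0 \<Phi>s hs x = kan_tail \<Phi>s hs (kan_in \<Phi>0 x) 0"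

definition is_kan :: "nat \<Rightarrow> nat \<Rightarrow> nat \<Rightarrow> nat \<Rightarrow> (real^'d::finite \<Rightarrow> real) \<Rightarrow> bool" where
  "is_kan k G W D g \<longleftrightarrow> 1 \<le> D \<and>
     (\<exists>R (\<Phi>0 :: nat \<Rightarrow> 'd \<Rightarrow> real \<Rightarrow> real) \<Phi>s hs. R > 0 \<and>
        length \<Phi>s = D - 1 \<and> length hs = D - 1 \<and> (\<forall>m\<in>set hs. m \<le> W) \<and>
        (\<forall>j i. kan_basis_fun k G R (\<Phi>0 j i)) \<and>
        (\<forall>\<Phi>\<in>set \<Phi>s. \<forall>j i. kan_basis_fun k G R (\<Phi> j i)) \<and>
        (\<forall>x. g x = kan_eval \<Phi>0 \<Phi>s hs x))"

end

theory Submission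
  imports Defs
begin

text \<open>The grid of size 2 on [-R, R] extended by k knots on each side has the knots
  t j = (j - k - 1) R. On [-R, R) the degree-k B-splines on these knots form a partition of unity
  and reproduce the identity with the Greville abscissae as coefficients, so every affine map
  y \<mapsto> \<alpha> y + \<beta> is such a spline there; and since t (k + 1) = 0, a multiple of one B-spline equals
  \<sigma>_k on all of (-\<infinity>, R). Hence the input affine map becomes one KAN layer and every further
  MLP layer (\<sigma>_k followed by an affine map) becomes two KAN layers, a diagonal \<sigma>_k layer and an
  affine one, for a total depth 2L - 1. As \<Omega> is bounded, all pre-activations on \<Omega> are bounded,
  and R is chosen so large that every spline identity applies; of the hypotheses on \<Omega> only
  boundedness is needed.\<close>

section \<open>B-splines on equispaced knots\<close>

locale equispaced_knots =
  fixes t :: "nat \<Rightarrow> real" and a h :: real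
  assumes knot_eq: "t j = a + real j * h" and spacing_pos: "h > 0"
begin

lemma bspline_eq_0_outside:
  "x < t i \<or> t (i + p + 1) \<le> x \<Longrightarrow> bspline t p i x = 0"
proof (induction p arbitrary: i)
  case 0
  then show ?case using spacing_pos by (auto simp: knot_eq)
next
  case (Suc p)
  have "bspline t p i x = 0" "bspline t p (Suc i) x = 0"
    using Suc.prems spacing_pos by (auto intro!: Suc.IH simp: knot_eq algebra_simps)
  then show ?case by simp
qed

lemma bspline_first_piece:
  "x < t (Suc i) \<Longrightarrow> bspline t p i x = (if t i \<le> x then (x - t i) ^ p / (fact p * h ^ p) else 0)"
proof (induction p)
  case (Suc p)
  have "bspline t p (Suc i) x = 0"
    using Suc.prems by (intro bspline_eq_0_outside) simp
  moreover have "t (Suc (i + p)) - t i = real (Suc p) * h"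
    by (simp add: knot_eq algebra_simps)
  ultimately show ?case
    using Suc spacing_pos by (simp add: field_simps)
qed simp

text \<open>At j = 0 the truncated index j - 1 is harmless, as bspline t p 0 vanishes on [t (p + 1), \<infinity>).\<close>
lemma sum_bspline_Suc:
  assumes "t (Suc p) \<le> x" and "x < t n"
  shows "(\<Sum>j<n. c j * bspline t (Suc p) j x) =
    (\<Sum>j<n. (c j * (x - t j) + c (j - 1) * (t (j + p + 1) - x)) / (real (Suc p) * h) * bspline t p j x)"
proof -
  define A where "A j = c j * (x - t j) / (real (Suc p) * h) * bspline t p j x" for j
  define F where "F j = c (j - 1) * (t (j + p + 1) - x) / (real (Suc p) * h) * bspline t p j x" for j
  have width: "t (Suc (j + p)) - t j = real (Suc p) * h" "t (Suc (Suc (j + p))) - t (Suc j) = real (Suc p) * h" for j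
    by (simp_all add: knot_eq algebra_simps)
  have "(\<Sum>j<n. c j * bspline t (Suc p) j x) = (\<Sum>j<n. A j + F (Suc j))"
    by (intro sum.cong) (simp_all add: A_def F_def width algebra_simps)
  also have "\<dots> = (\<Sum>j<n. A j) + (\<Sum>j<Suc n. F j) - F 0"
    by (simp only: sum.distrib sum.lessThan_Suc_shift)
  also have "\<dots> = (\<Sum>j<n. A j) + (\<Sum>j<n. F j)"
    using assms by (simp add: F_def bspline_eq_0_outside)
  finally show ?thesis
    using spacing_pos by (simp add: A_def F_def sum.distrib[symmetric] add_divide_distrib distrib_right)
qed

lemma sum_bspline_eq_1:
  "t p \<le> x \<Longrightarrow> x < t n \<Longrightarrow> (\<Sum>j<n. bspline t p j x) = 1"
proof (induction p)
  case 0
  have "(\<Sum>j<n. bspline t 0 j x) = (if x < t n then 1 else 0)" for n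
    using 0 spacing_pos by (induction n) (auto simp: knot_eq distrib_right)
  then show ?case using 0 by simp
next
  case (Suc p)
  have width: "(x - t j) + (t (j + p + 1) - x) = real (Suc p) * h" for j
    by (simp add: knot_eq algebra_simps)
  have "(\<Sum>j<n. bspline t (Suc p) j x) =
      (\<Sum>j<n. ((x - t j) + (t (j + p + 1) - x)) / (real (Suc p) * h) * bspline t p j x)"
    using Suc.prems sum_bspline_Suc[of p x n "\<lambda>_. 1"] by simp
  also have "\<dots> = (\<Sum>j<n. bspline t p j x)"
    using spacing_pos by (simp only: width) simp
  also have "\<dots> = 1"
    using Suc spacing_pos by (intro Suc.IH) (simp_all add: knot_eq distrib_right)
  finally show ?case .
qed

text \<open>t j + h (p + 1) / 2 is the Greville abscissa (t (j+1) + ... + t (j+p)) / p. The factor p makes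
  the identity hold trivially for p = 0, which serves as the base of the induction.\<close>
lemma sum_greville_bspline:
  "t p \<le> x \<Longrightarrow> x < t n \<Longrightarrow>
    real p * (\<Sum>j<n. (t j + h * (real p + 1) / 2) * bspline t p j x) = real p * x"
proof (induction p)
  case (Suc p)
  define \<xi> where "\<xi> q j = t j + h * (real q + 1) / 2" for q j
  have "t p \<le> x" using Suc.prems spacing_pos by (simp add: knot_eq distrib_right)
  then have IH: "real p * (\<Sum>j<n. \<xi> p j * bspline t p j x) = real p * x"
    and unity: "(\<Sum>j<n. bspline t p j x) = 1"
    using Suc sum_bspline_eq_1 by (simp_all add: \<xi>_def)
  have "(\<Sum>j<n. \<xi> (Suc p) j * bspline t (Suc p) j x) =
      (\<Sum>j<n. (\<xi> (Suc p) j * (x - t j) + \<xi> (Suc p) (j - 1) * (t (j + p + 1) - x)) / (real (Suc p) * h) * bspline t p j x)"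
    using Suc.prems by (intro sum_bspline_Suc) auto
  also have "\<dots> = (\<Sum>j<n. (real p * \<xi> p j + x) / real (Suc p) * bspline t p j x)"
  proof (rule sum.cong)
    fix j
    show "(\<xi> (Suc p) j * (x - t j) + \<xi> (Suc p) (j - 1) * (t (j + p + 1) - x)) / (real (Suc p) * h) * bspline t p j x
      = (real p * \<xi> p j + x) / real (Suc p) * bspline t p j x"
    proof (cases j)
      case 0
      then have "bspline t p j x = 0"
        using Suc.prems by (intro bspline_eq_0_outside) simp
      then show ?thesis by simp
    next
      case (Suc i)
      then have "\<xi> (Suc p) j * (x - t j) + \<xi> (Suc p) (j - 1) * (t (j + p + 1) - x) = h * (real p * \<xi> p j + x)"
        by (simp add: \<xi>_def knot_eq field_simps)
      then show ?thesis using spacing_pos by simp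
    qed
  qed simp
  also have "\<dots> = (real p * (\<Sum>j<n. \<xi> p j * bspline t p j x) + x * (\<Sum>j<n. bspline t p j x)) / real (Suc p)"
    by (simp add: sum_divide_distrib[symmetric] sum_distrib_left sum.distrib algebra_simps)
  also have "\<dots> = x"
    by (simp add: IH unity field_simps)
  finally show ?case by (simp add: \<xi>_def)
qed simp

end

section \<open>Splines on the grid of size 2\<close>

lemma equispaced_uniform_knots_grid2:
  "R > 0 \<Longrightarrow> equispaced_knots (uniform_knots R 2 k) (- R - real k * R) R"
  by unfold_locales (simp_all add: uniform_knots_def algebra_simps)

definition grid2_spline :: "nat \<Rightarrow> real \<Rightarrow> (nat \<Rightarrow> real) \<Rightarrow> real \<Rightarrow> real" where
  "grid2_spline k R c y = (\<Sum>i<2 + k. c i * bspline (uniform_knots R 2 k) k i y)"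

definition affine_coeffs :: "nat \<Rightarrow> real \<Rightarrow> real \<Rightarrow> real \<Rightarrow> nat \<Rightarrow> real" where
  "affine_coeffs k R \<alpha> \<beta> j = \<alpha> * (uniform_knots R 2 k j + R * (real k + 1) / 2) + \<beta>"

definition sigma_pow_coeffs :: "nat \<Rightarrow> real \<Rightarrow> nat \<Rightarrow> real" where
  "sigma_pow_coeffs k R j = (if j = k + 1 then fact k * R ^ k else 0)"

lemma kan_basis_fun_grid2_spline: "kan_basis_fun k 2 R (grid2_spline k R c)"
  unfolding kan_basis_fun_def grid2_spline_def
  by (intro exI[of _ 0] exI[of _ 1] exI[of _ c]) simp

lemma grid2_spline_affine_coeffs:
  assumes "1 \<le> k" and "R > 0" and "- R \<le> y" and "y < R"
  shows "grid2_spline k R (affine_coeffs k R \<alpha> \<beta>) y = \<alpha> * y + \<beta>"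
proof -
  let ?t = "uniform_knots R 2 k"
  define B where "B j = bspline ?t k j y" for j
  define \<xi> where "\<xi> j = ?t j + R * (real k + 1) / 2" for j
  interpret equispaced_knots ?t "- R - real k * R" R
    using assms(2) by (rule equispaced_uniform_knots_grid2)
  have "?t k \<le> y" "y < ?t (2 + k)"
    using assms(3,4) by (simp_all add: knot_eq algebra_simps)
  then have unity: "(\<Sum>j<2 + k. B j) = 1"
    and "real k * (\<Sum>j<2 + k. \<xi> j * B j) = real k * y"
    unfolding B_def \<xi>_def by (rule sum_bspline_eq_1, rule sum_greville_bspline)
  then have greville: "(\<Sum>j<2 + k. \<xi> j * B j) = y"
    using assms(1) by simp
  have "grid2_spline k R (affine_coeffs k R \<alpha> \<beta>) y = (\<Sum>j<2 + k. \<alpha> * (\<xi> j * B j) + \<beta> * B j)"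
    unfolding grid2_spline_def affine_coeffs_def B_def \<xi>_def by (simp only: algebra_simps)
  also have "\<dots> = \<alpha> * (\<Sum>j<2 + k. \<xi> j * B j) + \<beta> * (\<Sum>j<2 + k. B j)"
    by (simp only: sum.distrib sum_distrib_left)
  finally show ?thesis
    by (simp only: unity greville mult_1_right)
qed

text \<open>The knot t (k + 1) is 0, so below the next knot R the B-spline starting there is the
  truncated power max 0 y ^ k / (k! R ^ k).\<close>
lemma grid2_spline_sigma_pow_coeffs:
  assumes "1 \<le> k" and "R > 0" and "y < R"
  shows "grid2_spline k R (sigma_pow_coeffs k R) y = sigma_pow k y"
proof -
  let ?t = "uniform_knots R 2 k"
  interpret equispaced_knots ?t "- R - real k * R" R
    using assms(2) by (rule equispaced_uniform_knots_grid2)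
  have "?t (k + 1) = 0" "y < ?t (Suc (k + 1))"
    using assms(3) by (simp_all add: knot_eq algebra_simps)
  then have "bspline ?t k (k + 1) y = (if 0 \<le> y then y ^ k / (fact k * R ^ k) else 0)"
    by (simp add: bspline_first_piece)
  moreover have "grid2_spline k R (sigma_pow_coeffs k R) y = fact k * R ^ k * bspline ?t k (k + 1) y"
    by (simp add: grid2_spline_def sigma_pow_coeffs_def if_distrib sum.delta)
  ultimately show ?thesis
    using assms(1,2) by (simp add: sigma_pow_def max_def)
qed

section \<open>KAN layers realising MLP layers\<close>

definition sigma_kan_layer :: "nat \<Rightarrow> real \<Rightarrow> nat \<Rightarrow> nat \<Rightarrow> real \<Rightarrow> real" where
  "sigma_kan_layer k R j i = grid2_spline k R (if i = j then sigma_pow_coeffs k R else (\<lambda>_. 0))"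

text \<open>A hidden layer of width 0 is realised with width 1: the empty KAN layer outputs 0, whereas
  the MLP layer outputs its bias b.\<close>
definition affine_kan_layer ::
    "nat \<Rightarrow> real \<Rightarrow> (nat \<Rightarrow> nat \<Rightarrow> real) \<Rightarrow> (nat \<Rightarrow> real) \<Rightarrow> nat \<Rightarrow> nat \<Rightarrow> nat \<Rightarrow> real \<Rightarrow> real" where
  "affine_kan_layer k R M b m j i =
     grid2_spline k R (affine_coeffs k R (if i < m then M j i else 0) (b j / real (max m 1)))"

definition input_kan_layer ::
    "nat \<Rightarrow> real \<Rightarrow> (nat \<Rightarrow> 'd::finite \<Rightarrow> real) \<Rightarrow> (nat \<Rightarrow> real) \<Rightarrow> nat \<Rightarrow> 'd \<Rightarrow> real \<Rightarrow> real" where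
  "input_kan_layer k R M0 b0 j i = grid2_spline k R (affine_coeffs k R (M0 j i) (b0 j / real CARD('d)))"

fun kan_layers_of_mlp ::
    "nat \<Rightarrow> real \<Rightarrow> ((nat \<Rightarrow> nat \<Rightarrow> real) \<times> (nat \<Rightarrow> real)) list \<Rightarrow> nat list
      \<Rightarrow> (nat \<Rightarrow> nat \<Rightarrow> real \<Rightarrow> real) list" where
  "kan_layers_of_mlp k R ((M, b) # As) (m # ms) =
     sigma_kan_layer k R # affine_kan_layer k R M b m # kan_layers_of_mlp k R As ms"
| "kan_layers_of_mlp k R _ _ = []"

fun kan_dims_of_mlp :: "((nat \<Rightarrow> nat \<Rightarrow> real) \<times> (nat \<Rightarrow> real)) list \<Rightarrow> nat list \<Rightarrow> nat list" where
  "kan_dims_of_mlp ((M, b) # As) (m # ms) = max m 1 # max m 1 # kan_dims_of_mlp As ms"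
| "kan_dims_of_mlp _ _ = []"

fun mlp_in_range ::
    "nat \<Rightarrow> real \<Rightarrow> ((nat \<Rightarrow> nat \<Rightarrow> real) \<times> (nat \<Rightarrow> real)) list \<Rightarrow> nat list \<Rightarrow> (nat \<Rightarrow> real) \<Rightarrow> bool" where
  "mlp_in_range k R ((M, b) # As) (m # ms) h \<longleftrightarrow>
     (\<forall>i<max m 1. h i < R \<and> sigma_pow k (h i) < R) \<and>
     mlp_in_range k R As ms (aff M b m (\<lambda>i. sigma_pow k (h i)))"
| "mlp_in_range k R _ _ h \<longleftrightarrow> True"

lemma sigma_pow_nonneg: "0 \<le> sigma_pow k y"
  by (simp add: sigma_pow_def)

lemma kan_layer_sigma_kan_layer:
  assumes "1 \<le> k" and "R > 0" and "i < n" and "h i < R"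
  shows "kan_layer (sigma_kan_layer k R) n h i = sigma_pow k (h i)"
proof -
  have "kan_layer (sigma_kan_layer k R) n h i = (\<Sum>l<n. if l = i then sigma_pow k (h l) else 0)"
    unfolding kan_layer_def sigma_kan_layer_def
    using grid2_spline_sigma_pow_coeffs[OF assms(1,2,4)] by (intro sum.cong) (auto simp: grid2_spline_def)
  then show ?thesis
    using assms(3) by simp
qed

lemma kan_layer_affine_kan_layer:
  assumes "1 \<le> k" and "R > 0" and "\<forall>i<max m 1. - R \<le> g i \<and> g i < R"
  shows "kan_layer (affine_kan_layer k R M b m) (max m 1) g = aff M b m g"
proof
  fix j
  have "kan_layer (affine_kan_layer k R M b m) (max m 1) g j =
      (\<Sum>i<max m 1. (if i < m then M j i * g i else 0) + b j / real (max m 1))"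
    unfolding kan_layer_def affine_kan_layer_def
    using assms grid2_spline_affine_coeffs by (intro sum.cong) auto
  also have "\<dots> = (\<Sum>i<m. M j i * g i) + b j"
  proof -
    have "{..<max m 1} \<inter> {i. i < m} = {..<m}" by auto
    then show ?thesis by (simp add: sum.distrib sum.If_cases)
  qed
  finally show "kan_layer (affine_kan_layer k R M b m) (max m 1) g j = aff M b m g j"
    by (simp add: aff_def)
qed

lemma kan_tail_kan_layers_of_mlp:
  assumes "1 \<le> k" and "R > 0"
  shows "mlp_in_range k R As ms h \<Longrightarrow>
    kan_tail (kan_layers_of_mlp k R As ms) (kan_dims_of_mlp As ms) h = mlp_tail k As ms h"
proof (induction As ms arbitrary: h rule: kan_dims_of_mlp.induct)
  case (1 M b As m ms)
  define g where "g = kan_layer (sigma_kan_layer k R) (max m 1) h"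
  have range: "\<forall>i<max m 1. h i < R \<and> sigma_pow k (h i) < R"
    and tail: "mlp_in_range k R As ms (aff M b m (\<lambda>i. sigma_pow k (h i)))"
    using "1.prems" by simp_all
  then have g: "g i = sigma_pow k (h i)" if "i < max m 1" for i
    using that assms kan_layer_sigma_kan_layer by (simp add: g_def)
  have "- R \<le> g i \<and> g i < R" if "i < max m 1" for i
    using range assms(2) sigma_pow_nonneg[of k "h i"] g[OF that] that by auto
  then have "kan_layer (affine_kan_layer k R M b m) (max m 1) g = aff M b m g"
    by (intro kan_layer_affine_kan_layer[OF assms]) simp
  also have "\<dots> = aff M b m (\<lambda>i. sigma_pow k (h i))"
    unfolding aff_def using g by simp
  finally show ?case
    using "1.IH"[OF tail] by (simp add: g_def)
qed simp_all

lemma length_kan_layers_of_mlp: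
  "length As = length ms \<Longrightarrow> length (kan_layers_of_mlp k R As ms) = 2 * length As"
  by (induction k R As ms rule: kan_layers_of_mlp.induct) auto

lemma length_kan_dims_of_mlp:
  "length As = length ms \<Longrightarrow> length (kan_dims_of_mlp As ms) = 2 * length As"
  by (induction As ms rule: kan_dims_of_mlp.induct) auto

lemma set_kan_dims_of_mlp: "set (kan_dims_of_mlp As ms) \<subseteq> (\<lambda>m. max m 1) ` set ms"
  by (induction As ms rule: kan_dims_of_mlp.induct) auto

lemma kan_basis_fun_kan_layers_of_mlp:
  "\<Phi> \<in> set (kan_layers_of_mlp k R As ms) \<Longrightarrow> kan_basis_fun k 2 R (\<Phi> j i)"
  by (induction k R As ms rule: kan_layers_of_mlp.induct)
    (auto simp: sigma_kan_layer_def affine_kan_layer_def kan_basis_fun_grid2_spline)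

lemma kan_in_input_kan_layer:
  fixes M0 :: "nat \<Rightarrow> 'd::finite \<Rightarrow> real"
  assumes "1 \<le> k" and "R > 0" and "\<forall>i. - R \<le> x $ i \<and> x $ i < R"
  shows "kan_in (input_kan_layer k R M0 b0) x = aff_in M0 b0 x"
proof
  fix j
  have "kan_in (input_kan_layer k R M0 b0) x j = (\<Sum>i\<in>UNIV. M0 j i * x $ i + b0 j / real CARD('d))"
    unfolding kan_in_def input_kan_layer_def using assms grid2_spline_affine_coeffs by simp
  then show "kan_in (input_kan_layer k R M0 b0) x j = aff_in M0 b0 x j"
    by (simp add: sum.distrib aff_in_def)
qed

lemma kan_eval_of_mlp:
  assumes "1 \<le> k" and "R > 0" and "\<forall>i. - R \<le> x $ i \<and> x $ i < R"
    and "mlp_in_range k R As hs (aff_in M0 b0 x)"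
  shows "kan_eval (input_kan_layer k R M0 b0) (kan_layers_of_mlp k R As hs) (kan_dims_of_mlp As hs) x =
    mlp_eval k M0 b0 As hs x"
  using assms by (simp add: kan_eval_def mlp_eval_def kan_in_input_kan_layer kan_tail_kan_layers_of_mlp)

lemma is_kan_of_mlp:
  fixes M0 :: "nat \<Rightarrow> 'd::finite \<Rightarrow> real"
  assumes "R > 0" and "1 \<le> W" and "length As = length hs" and "\<forall>m\<in>set hs. m \<le> W"
  shows "is_kan k 2 W (2 * length As + 1)
    (kan_eval (input_kan_layer k R M0 b0) (kan_layers_of_mlp k R As hs) (kan_dims_of_mlp As hs))"
  unfolding is_kan_def
proof (intro conjI exI[of _ R] exI[of _ "input_kan_layer k R M0 b0"]
    exI[of _ "kan_layers_of_mlp k R As hs"] exI[of _ "kan_dims_of_mlp As hs"])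
  show "\<forall>m\<in>set (kan_dims_of_mlp As hs). m \<le> W"
    using set_kan_dims_of_mlp assms(2,4) by fastforce
qed (use assms in \<open>simp_all add: length_kan_layers_of_mlp length_kan_dims_of_mlp
  kan_basis_fun_kan_layers_of_mlp input_kan_layer_def kan_basis_fun_grid2_spline\<close>)

section \<open>Boundedness of the pre-activations\<close>

definition coords_bounded :: "(nat \<Rightarrow> real) set \<Rightarrow> bool" where
  "coords_bounded H \<longleftrightarrow> (\<forall>i. \<exists>B. \<forall>h\<in>H. \<bar>h i\<bar> \<le> B)"

lemma coords_bounded_uniform:
  assumes "coords_bounded H"
  shows "\<exists>B. \<forall>h\<in>H. \<forall>i<N. \<bar>h i\<bar> \<le> B"
proof (induction N)
  case (Suc N)
  then obtain B where "\<forall>h\<in>H. \<forall>i<N. \<bar>h i\<bar> \<le> B" by blast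
  moreover obtain B' where "\<forall>h\<in>H. \<bar>h N\<bar> \<le> B'"
    using assms unfolding coords_bounded_def by blast
  ultimately have "\<forall>h\<in>H. \<forall>i<Suc N. \<bar>h i\<bar> \<le> max B B'"
    by (auto simp: less_Suc_eq le_max_iff_disj)
  then show ?case by blast
qed simp

lemma abs_sigma_pow_le: "\<bar>y\<bar> \<le> B \<Longrightarrow> \<bar>sigma_pow k y\<bar> \<le> B ^ k"
  unfolding sigma_pow_def by (simp add: power_mono max_def)

lemma abs_aff_le:
  assumes "\<forall>i<m. \<bar>g i\<bar> \<le> B"
  shows "\<bar>aff M b m g j\<bar> \<le> (\<Sum>i<m. \<bar>M j i\<bar>) * B + \<bar>b j\<bar>"
proof -
  have "\<bar>\<Sum>i<m. M j i * g i\<bar> \<le> (\<Sum>i<m. \<bar>M j i\<bar> * B)"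
    using assms by (intro order_trans[OF sum_abs] sum_mono) (simp add: abs_mult mult_left_mono)
  then show ?thesis
    unfolding aff_def by (simp add: sum_distrib_right abs_triangle_ineq order_trans[OF abs_triangle_ineq])
qed

lemma coords_bounded_aff_sigma_pow:
  assumes "coords_bounded H"
  shows "coords_bounded ((\<lambda>h. aff M b m (\<lambda>i. sigma_pow k (h i))) ` H)"
proof -
  obtain B where "\<forall>h\<in>H. \<forall>i<m. \<bar>h i\<bar> \<le> B"
    using coords_bounded_uniform[OF assms] by blast
  then have "\<bar>aff M b m (\<lambda>i. sigma_pow k (h i)) j\<bar> \<le> (\<Sum>i<m. \<bar>M j i\<bar>) * B ^ k + \<bar>b j\<bar>"
    if "h \<in> H" for h j
    using that by (intro abs_aff_le) (simp add: abs_sigma_pow_le)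
  then show ?thesis
    unfolding coords_bounded_def by blast
qed

lemma coords_bounded_aff_in:
  fixes \<Omega> :: "(real^'d) set"
  assumes "\<forall>x\<in>\<Omega>. \<forall>i. \<bar>x $ i\<bar> \<le> C"
  shows "coords_bounded (aff_in M0 b0 ` \<Omega>)"
proof -
  have "\<bar>aff_in M0 b0 x j\<bar> \<le> (\<Sum>i\<in>UNIV. \<bar>M0 j i\<bar>) * C + \<bar>b0 j\<bar>" if "x \<in> \<Omega>" for x j
  proof -
    have "\<bar>\<Sum>i\<in>UNIV. M0 j i * x $ i\<bar> \<le> (\<Sum>i\<in>UNIV. \<bar>M0 j i\<bar> * C)"
      using assms that by (intro order_trans[OF sum_abs] sum_mono) (simp add: abs_mult mult_left_mono)
    then show ?thesis
      unfolding aff_in_def by (simp add: sum_distrib_right order_trans[OF abs_triangle_ineq])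
  qed
  then show ?thesis
    unfolding coords_bounded_def by blast
qed

lemma eventually_mlp_in_range:
  "coords_bounded H \<Longrightarrow> \<forall>\<^sub>F R in at_top. \<forall>h\<in>H. mlp_in_range k R As ms h"
proof (induction As ms arbitrary: H rule: kan_dims_of_mlp.induct)
  case (1 M b As m ms)
  obtain B where B: "\<forall>h\<in>H. \<forall>i<max m 1. \<bar>h i\<bar> \<le> B"
    using coords_bounded_uniform[OF "1.prems"] by blast
  have "\<forall>\<^sub>F R in at_top. max B (B ^ k) < R \<and>
      (\<forall>h'\<in>(\<lambda>h. aff M b m (\<lambda>i. sigma_pow k (h i))) ` H. mlp_in_range k R As ms h')"
    using "1.prems" by (intro eventually_conj eventually_gt_at_top "1.IH" coords_bounded_aff_sigma_pow)
  then show ?case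
  proof eventually_elim
    case (elim R)
    have "h i < R \<and> sigma_pow k (h i) < R" if "h \<in> H" and "i < max m 1" for h i
      using B that abs_sigma_pow_le[of "h i" B k] elim by fastforce
    then show ?case using elim by simp
  qed
qed simp_all

theorem mainTheorem4:
  fixes \<Omega> :: "(real^'d) set" and f :: "real^'d \<Rightarrow> real" and k W L :: nat
  assumes "bounded \<Omega>" and "open \<Omega>" and "connected \<Omega>" and "\<Omega> \<noteq> {}"
    and "1 \<le> k" and "1 \<le> W" and "1 \<le> L"
    and "is_mlp k W L f"
  shows "\<exists>(g :: real^'d \<Rightarrow> real) D. D \<le> 2 * L \<and> is_kan k 2 W D g \<and> (\<forall>x\<in>\<Omega>. g x = f x)"
proof -
  obtain M0 :: "nat \<Rightarrow> 'd \<Rightarrow> real" and b0 As hs where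
    lengths: "length As = L - 1" "length hs = L - 1" and widths: "\<forall>m\<in>set hs. m \<le> W"
    and f_eq: "\<forall>x. f x = mlp_eval k M0 b0 As hs x"
    using assms(8) unfolding is_mlp_def by blast
  obtain C where C: "\<forall>x\<in>\<Omega>. \<forall>i. \<bar>x $ i\<bar> \<le> C"
    using assms(1) component_le_norm_cart order_trans unfolding bounded_iff by metis
  have "\<forall>\<^sub>F R in at_top. max 0 C < R \<and> (\<forall>h\<in>aff_in M0 b0 ` \<Omega>. mlp_in_range k R As hs h)"
    by (intro eventually_conj eventually_gt_at_top eventually_mlp_in_range coords_bounded_aff_in[OF C])
  then obtain R where R: "max 0 C < R" and in_range: "\<forall>x\<in>\<Omega>. mlp_in_range k R As hs (aff_in M0 b0 x)"
    unfolding eventually_at_top_linorder by auto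
  define g where "g = kan_eval (input_kan_layer k R M0 b0) (kan_layers_of_mlp k R As hs) (kan_dims_of_mlp As hs)"
  have "is_kan k 2 W (2 * length As + 1) g"
    unfolding g_def using R lengths widths assms(6) by (intro is_kan_of_mlp) auto
  moreover have "g x = f x" if "x \<in> \<Omega>" for x
  proof -
    have "\<forall>i. - R \<le> x $ i \<and> x $ i < R"
      using C R that by (smt (verit) max.cobounded2)
    then have "g x = mlp_eval k M0 b0 As hs x"
      unfolding g_def using assms(5) R in_range that by (intro kan_eval_of_mlp) auto
    then show ?thesis
      using f_eq by simp
  qed
  moreover have "2 * length As + 1 \<le> 2 * L"
    using lengths assms(7) by simp
  ultimately show ?thesis by blast
qed

end
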